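(* Let $a>b\geq c>d>0$ and let $p,q$ be real numbers with $p,q\notin\{0,-1\}$. Then $$\frac{L_{p}^{p}(a,b)}{L_{p}^{p}(c,d)}\geq \frac{L_{q}^{q}(a,b)}{L_{q}^{q}(c,d)}\left(1+\frac{p-q}{q+1}\,\ln\frac{I(a^{q+1},b^{q+1})}{I(c^{q+1},d^{q+1})}\right),$$ with equality if and only if $p=q$. In particular, $$\exp\left(1-\frac{L(c,d)}{L(a,b)}\right)<\frac{I(a,b)}{I(c,d)}<\exp\left(\frac{L(a,b)}{L(c,d)}-1\right),$$ and for all $a>b>0$, $$\exp\left(1-\frac{b}{L(a,b)}\right)<\frac{I(a,b)}{b}<\exp\left(\frac{L(a,b)}{b}-1\right).$$
   Context: For $u,v>0$: the logarithmic mean is $L(u,v)=\frac{u-v}{\ln u-\ln v}$ if $u\neq v$ and $L(u,u)=u$; the identric mean is $I(u,v)=\frac{1}{e}\left(\frac{u^u}{v^v}\right)^{1/(u-v)}$ if $u\neq v$ and $I(u,u)=u$; for $p\neq 0,-1$ the $p$-logarithmic mean is $L_p(u,v)=\left(\frac{u^{p+1}-v^{p+1}}{(p+1)(u-v)}\right)^{1/p}$ if $u\neq v$ and $L_p(u,u)=u$. $L_p^p$ denotes the $p$-th power of $L_p$. *)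

theory Defs
  imports Complex_Main
begin

definition logmean :: "real \<Rightarrow> real \<Rightarrow> real" where
  "logmean u v = (if u = v then u else (u - v) / (ln u - ln v))"

definition identric :: "real \<Rightarrow> real \<Rightarrow> real" where
  "identric u v = (if u = v then u
     else (1 / exp 1) * ((u powr u) / (v powr v)) powr (1 / (u - v)))"

definition plogmean :: "real \<Rightarrow> real \<Rightarrow> real \<Rightarrow> real" where
  "plogmean p u v = (if u = v then u
     else ((u powr (p + 1) - v powr (p + 1)) / ((p + 1) * (u - v))) powr (1 / p))"

end

theory Submission
  imports Defs "HOL-Analysis.Analysis"
begin

text \<open>
  Put \<open>A = ln a\<close>, \<open>B = ln b\<close>, \<open>C = ln c\<close>, \<open>D = ln d\<close> and
  \<open>Q t = (exp (t A) - exp (t B)) / (exp (t C) - exp (t D))\<close>. Then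
  \<open>L\<^sub>p\<^sup>p(a,b) / L\<^sub>p\<^sup>p(c,d) = (c - d) / (a - b) \<cdot> Q (p + 1)\<close> and
  \<open>ln (I(a\<^sup>s,b\<^sup>s) / I(c\<^sup>s,d\<^sup>s)) = s \<cdot> Q' s / Q s\<close>, so the main inequality is the tangent
  line inequality for \<open>Q\<close> at \<open>s = q + 1\<close>, and it follows from strict convexity of \<open>Q\<close>.
  Dividing numerator and denominator by \<open>t exp (t C)\<close> writes \<open>Q = N / M\<close> with
  \<open>N t = \<integral>\<^bsub>B-C\<^esub>\<^bsup>A-C\<^esup> exp (t u) du\<close> and \<open>M t = \<integral>\<^bsub>D-C\<^esub>\<^bsup>0\<^esup> exp (t u) du\<close>.
  Because \<open>B \<ge> C\<close>, \<open>N\<close> is positive, nondecreasing and strictly convex, while \<open>M\<close> is positive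
  and decreasing with \<open>1 / M\<close> convex; hence \<open>N \<cdot> (1 / M)\<close> is strictly convex.

  The bounds for \<open>I(a,b) / I(c,d)\<close> are the tangent inequalities at \<open>s = 1\<close> for \<open>Q\<close> and at
  \<open>s = -1\<close> for the quotient of the reflected data \<open>-D, -C, -B, -A\<close>, both evaluated at
  \<open>t = 0\<close>. Since \<open>ln (I(a,b) / b) = a / L(a,b) - 1\<close>, the bounds for \<open>I(a,b) / b\<close> are
  equivalent to \<open>\<surd>(ab) < L(a,b) < (a + b) / 2\<close>.
\<close>

section \<open>Elementary exponential inequalities\<close>

lemma add_one_less_exp:
  fixes x :: real
  assumes "x \<noteq> 0"
  shows "1 + x < exp x"
proof (cases "1 + x / 2 \<ge> 0")
  case True
  have "0 < x\<^sup>2"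
    using assms by simp
  then have "1 + x < (1 + x / 2)\<^sup>2"
    by (simp add: power2_eq_square field_simps)
  also have "\<dots> \<le> exp (x / 2) ^ 2"
    using True exp_ge_add_one_self[of "x / 2"] by (intro power_mono) auto
  also have "\<dots> = exp x"
    by (simp add: power2_eq_square flip: exp_add)
  finally show ?thesis .
next
  case False
  then show ?thesis
    using exp_gt_zero[of x] by linarith
qed

lemma zero_less_mult_if_deriv_pos:
  fixes f f' :: "real \<Rightarrow> real"
  assumes "f 0 = 0"
    and "\<And>y. (f has_real_derivative f' y) (at y)"
    and "\<And>y. y \<noteq> 0 \<Longrightarrow> 0 < f' y"
    and "x \<noteq> 0"
  shows "0 < x * f x"
proof (cases "0 < x")
  case True
  then obtain z where "0 < z" "f x - f 0 = (x - 0) * f' z"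
    using MVT2[OF True, of f f'] assms(2) by blast
  with True assms(1) assms(3)[of z] show ?thesis by simp
next
  case False
  with assms(4) have "x < 0" by simp
  then obtain z where "z < 0" "f 0 - f x = (0 - x) * f' z"
    using MVT2[OF \<open>x < 0\<close>, of f f'] assms(2) by blast
  with \<open>x < 0\<close> assms(1) assms(3)[of z] have "f x < 0"
    by (simp add: mult_neg_pos)
  with \<open>x < 0\<close> show ?thesis by (simp add: mult_neg_neg)
qed

lemma exp_poly_mult_pos:
  fixes x :: real
  assumes "x \<noteq> 0"
  shows "0 < x * ((x - 2) * exp x + x + 2)"
proof (rule zero_less_mult_if_deriv_pos[OF _ _ _ assms])
  show "((\<lambda>y. (y - 2) * exp y + y + 2) has_real_derivative (y - 1) * exp y + 1) (at y)" for y :: real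
    by (auto intro!: derivative_eq_intros simp: algebra_simps)
  show "0 < (y - 1) * exp y + 1" if "y \<noteq> 0" for y :: real
  proof -
    have "(1 - y) * exp y < exp (- y) * exp y"
      using add_one_less_exp[of "- y"] that by (simp add: mult_strict_right_mono)
    also have "\<dots> = 1"
      by (simp flip: exp_add)
    finally show ?thesis
      by (simp add: algebra_simps)
  qed
qed simp

lemma sq_mult_exp_less_sq_exp_minus_one:
  fixes x :: real
  assumes "0 < x"
  shows "x\<^sup>2 * exp x < (exp x - 1)\<^sup>2"
proof -
  have "0 < x / 2 * (exp (x / 2) - exp (- (x / 2)) - 2 * (x / 2))"
  proof (rule zero_less_mult_if_deriv_pos)
    show "((\<lambda>y. exp y - exp (- y) - 2 * y) has_real_derivative exp y + exp (- y) - 2) (at y)" for y :: real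
      by (auto intro!: derivative_eq_intros)
    show "0 < exp y + exp (- y) - 2" if "y \<noteq> 0" for y :: real
      using add_one_less_exp[of y] add_one_less_exp[of "- y"] that by simp
  qed (use assms in simp_all)
  then have "x < exp (x / 2) - exp (- (x / 2))"
    using assms by (simp add: zero_less_mult_iff)
  then have "x * exp (x / 2) < (exp (x / 2) - exp (- (x / 2))) * exp (x / 2)"
    by (simp add: mult_strict_right_mono)
  also have "\<dots> = exp x - 1"
    by (simp add: algebra_simps flip: exp_add)
  finally have "(x * exp (x / 2))\<^sup>2 < (exp x - 1)\<^sup>2"
    using assms by (intro power_strict_mono) auto
  then show ?thesis
    by (simp add: power_mult_distrib flip: exp_of_nat_mult)
qed

section \<open>Convexity of a quotient\<close>

lemma above_tangent_if_second_deriv_pos: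
  fixes f f' f'' :: "real \<Rightarrow> real"
  assumes f: "\<And>x. (f has_real_derivative f' x) (at x)"
    and f': "\<And>x. (f' has_real_derivative f'' x) (at x)"
    and pos: "\<And>x. 0 < f'' x"
    and "t \<noteq> s"
  shows "f s + f' s * (t - s) < f t"
proof -
  have f'_less: "f' x < f' y" if "x < y" for x y
    using f' pos by (intro DERIV_pos_imp_increasing[OF that]) blast
  show ?thesis
  proof (cases "s < t")
    case True
    then obtain z where "s < z" "f t - f s = (t - s) * f' z"
      using MVT2[OF True, of f f'] f by blast
    moreover have "(t - s) * f' s < (t - s) * f' z"
      using True f'_less \<open>s < z\<close> by (simp add: mult_strict_left_mono)
    ultimately show ?thesis
      by (simp add: algebra_simps)
  next
    case False
    with \<open>t \<noteq> s\<close> have "t < s" by simp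
    then obtain z where "z < s" "f s - f t = (s - t) * f' z"
      using MVT2[OF \<open>t < s\<close>, of f f'] f by blast
    moreover have "(s - t) * f' z < (s - t) * f' s"
      using \<open>t < s\<close> f'_less \<open>z < s\<close> by (simp add: mult_strict_left_mono)
    ultimately show ?thesis
      by (simp add: algebra_simps)
  qed
qed

lemma quotient_above_tangent:
  fixes N N' N'' M M' M'' :: "real \<Rightarrow> real"
  assumes N: "\<And>x. (N has_real_derivative N' x) (at x)"
    and N': "\<And>x. (N' has_real_derivative N'' x) (at x)"
    and M: "\<And>x. (M has_real_derivative M' x) (at x)"
    and M': "\<And>x. (M' has_real_derivative M'' x) (at x)"
    and N_pos: "\<And>x. 0 < N x" and N'_nonneg: "\<And>x. 0 \<le> N' x" and N''_pos: "\<And>x. 0 < N'' x"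
    and M_pos: "\<And>x. 0 < M x" and M'_nonpos: "\<And>x. M' x \<le> 0"
    and M''_bound: "\<And>x. M x * M'' x \<le> 2 * (M' x)\<^sup>2"
    and "t \<noteq> s"
  shows "N s / M s + (N' s * M s - N s * M' s) / (M s)\<^sup>2 * (t - s) < N t / M t"
proof (rule above_tangent_if_second_deriv_pos[OF _ _ _ \<open>t \<noteq> s\<close>])
  define Q'' where "Q'' x = N'' x / M x - 2 * N' x * M' x / (M x)\<^sup>2
      + N x * (2 * (M' x)\<^sup>2 - M x * M'' x) / (M x) ^ 3" for x
  show "((\<lambda>x. N x / M x) has_real_derivative (N' x * M x - N x * M' x) / (M x)\<^sup>2) (at x)" for x
    using M_pos[of x]
    by (auto intro!: derivative_eq_intros N M simp: field_simps power2_eq_square)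
  show "((\<lambda>x. (N' x * M x - N x * M' x) / (M x)\<^sup>2) has_real_derivative Q'' x) (at x)" for x
    using M_pos[of x]
    by (auto intro!: derivative_eq_intros N M N' M'
        simp: Q''_def field_simps power2_eq_square power3_eq_cube)
  show "0 < Q'' x" for x
  proof -
    have "0 < N'' x / M x"
      using N''_pos M_pos by simp
    moreover have "0 \<le> - (2 * N' x * M' x / (M x)\<^sup>2)"
      using N'_nonneg[of x] M'_nonpos[of x] M_pos[of x]
      by (simp add: mult_nonneg_nonpos divide_nonpos_pos)
    moreover have "0 \<le> N x * (2 * (M' x)\<^sup>2 - M x * M'' x) / (M x) ^ 3"
      using N_pos[of x] M_pos[of x] M''_bound[of x] by simp
    ultimately show ?thesis
      unfolding Q''_def by linarith
  qed
qed

section \<open>Exponential moments\<close>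

definition exp_moment :: "nat \<Rightarrow> real \<Rightarrow> real \<Rightarrow> real \<Rightarrow> real" where
  "exp_moment k a b t = integral {a..b} (\<lambda>u. u ^ k * exp (t * u))"

lemma has_real_derivative_exp_moment:
  "(exp_moment k a b has_real_derivative exp_moment (Suc k) a b t) (at t)"
proof -
  have "((\<lambda>t. integral (cbox a b) (\<lambda>u. u ^ k * exp (t * u))) has_field_derivative
        integral (cbox a b) (\<lambda>u. u * (u ^ k * exp (t * u)))) (at t within UNIV)"
    by (rule leibniz_rule_field_derivative)
       (auto intro!: derivative_eq_intros integrable_continuous_interval continuous_intros
             simp: case_prod_beta)
  then show ?thesis
    unfolding exp_moment_def fun_eq_iff cbox_interval by (simp add: algebra_simps)
qed

lemma integral_eq_antiderivative_diff:
  fixes f F :: "real \<Rightarrow> real"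
  assumes "a \<le> b" and "\<And>u. (F has_real_derivative f u) (at u)"
  shows "integral {a..b} f = F b - F a"
  using assms
  by (intro integral_unique fundamental_theorem_of_calculus)
     (auto simp flip: has_real_derivative_iff_has_vector_derivative
           intro: has_field_derivative_at_within)

lemma exp_moment_0_eq:
  "a \<le> b \<Longrightarrow> t \<noteq> 0 \<Longrightarrow> exp_moment 0 a b t = (exp (t * b) - exp (t * a)) / t"
  unfolding exp_moment_def
  by (subst integral_eq_antiderivative_diff[where F = "\<lambda>u. exp (t * u) / t"])
     (auto intro!: derivative_eq_intros simp: diff_divide_distrib)

lemma exp_moment_1_eq:
  "a \<le> b \<Longrightarrow> t \<noteq> 0 \<Longrightarrow>
    exp_moment 1 a b t = exp (t * b) * (b / t - 1 / t\<^sup>2) - exp (t * a) * (a / t - 1 / t\<^sup>2)"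
  unfolding exp_moment_def
  by (subst integral_eq_antiderivative_diff[where F = "\<lambda>u. exp (t * u) * (u / t - 1 / t\<^sup>2)"])
     (auto intro!: derivative_eq_intros simp: field_simps power2_eq_square)

lemma exp_moment_2_eq:
  "a \<le> b \<Longrightarrow> t \<noteq> 0 \<Longrightarrow>
    exp_moment 2 a b t = exp (t * b) * (b\<^sup>2 / t - 2 * b / t\<^sup>2 + 2 / t ^ 3)
      - exp (t * a) * (a\<^sup>2 / t - 2 * a / t\<^sup>2 + 2 / t ^ 3)"
  unfolding exp_moment_def
  by (subst integral_eq_antiderivative_diff
        [where F = "\<lambda>u. exp (t * u) * (u\<^sup>2 / t - 2 * u / t\<^sup>2 + 2 / t ^ 3)"])
     (auto intro!: derivative_eq_intros simp: field_simps power2_eq_square power3_eq_cube)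

lemma exp_moment_at_0:
  assumes "a \<le> b"
  shows "exp_moment k a b 0 = (b ^ (k + 1) - a ^ (k + 1)) / (k + 1)"
proof -
  have "((\<lambda>u. u ^ (k + 1) / (k + 1)) has_real_derivative u ^ k * exp (0 * u)) (at u)" for u :: real
    using DERIV_cdivide[OF DERIV_pow[of "k + 1" u], of "k + 1"] by simp
  then show ?thesis
    unfolding exp_moment_def
    by (subst integral_eq_antiderivative_diff[OF assms]) (simp_all add: diff_divide_distrib)
qed

lemma exp_moment_pos:
  assumes "a < b" and "\<And>u. a < u \<Longrightarrow> u < b \<Longrightarrow> 0 < u ^ k"
  shows "0 < exp_moment k a b t"
proof -
  have "integral {a..b} (\<lambda>_. 0) < integral {a..b} (\<lambda>u. u ^ k * exp (t * u))"
    using assms by (intro integral_less_real) (auto intro!: continuous_intros)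
  then show ?thesis
    by (simp add: exp_moment_def)
qed

lemma exp_moment_neg:
  assumes "a < b" and "\<And>u. a < u \<Longrightarrow> u < b \<Longrightarrow> u ^ k < 0"
  shows "exp_moment k a b t < 0"
proof -
  have "integral {a..b} (\<lambda>u. u ^ k * exp (t * u)) < integral {a..b} (\<lambda>_. 0)"
    using assms by (intro integral_less_real) (auto intro!: continuous_intros simp: mult_neg_pos)
  then show ?thesis
    by (simp add: exp_moment_def)
qed

text \<open>For \<open>M = exp_moment 0 (- w) 0\<close>, the inequality \<open>M M'' < 2 M'\<^sup>2\<close> says \<open>(1 / M)'' > 0\<close>.\<close>
lemma exp_moment_reciprocal_convex:
  assumes "0 < w"
  shows "exp_moment 0 (- w) 0 t * exp_moment 2 (- w) 0 t < 2 * (exp_moment 1 (- w) 0 t)\<^sup>2"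
proof (cases "t = 0")
  case True
  have "0 < w ^ 4"
    using assms by simp
  with True assms show ?thesis
    by (simp add: exp_moment_at_0 field_simps power2_eq_square power3_eq_cube power4_eq_xxxx)
next
  case False
  define x where "x = t * w"
  have "x \<noteq> 0"
    using False assms by (simp add: x_def)
  have e: "exp (- (t * w)) = 1 / exp x"
    by (simp add: x_def exp_minus field_simps)
  have M0: "exp_moment 0 (- w) 0 t = (exp x - 1) / (t * exp x)"
    using exp_moment_0_eq[of "- w" 0 t] assms False by (simp add: e field_simps)
  have M1: "exp_moment 1 (- w) 0 t = (x + 1 - exp x) / (t\<^sup>2 * exp x)"
    using exp_moment_1_eq[of "- w" 0 t] assms False by (simp add: e x_def field_simps power2_eq_square)
  have M2: "exp_moment 2 (- w) 0 t = (2 * exp x - x\<^sup>2 - 2 * x - 2) / (t ^ 3 * exp x)"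
    using exp_moment_2_eq[of "- w" 0 t] assms False
    by (simp add: e x_def field_simps power2_eq_square power3_eq_cube)
  have "2 * (exp_moment 1 (- w) 0 t)\<^sup>2 - exp_moment 0 (- w) 0 t * exp_moment 2 (- w) 0 t
      = x * ((x - 2) * exp x + x + 2) / (t ^ 4 * (exp x)\<^sup>2)"
    unfolding M0 M1 M2 using False
    by (simp add: field_simps power2_eq_square power3_eq_cube power4_eq_xxxx)
  also have "\<dots> > 0"
    using exp_poly_mult_pos[OF \<open>x \<noteq> 0\<close>] False by simp
  finally show ?thesis
    by simp
qed

section \<open>The exponential quotient\<close>

definition exp_quotient :: "real \<Rightarrow> real \<Rightarrow> real \<Rightarrow> real \<Rightarrow> real \<Rightarrow> real" where
  "exp_quotient A B C D t =
    (if t = 0 then (A - B) / (C - D)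
     else (exp (t * A) - exp (t * B)) / (exp (t * C) - exp (t * D)))"

definition exp_logderiv :: "real \<Rightarrow> real \<Rightarrow> real \<Rightarrow> real" where
  "exp_logderiv A B t = (exp (t * A) * A - exp (t * B) * B) / (exp (t * A) - exp (t * B))"

lemma diff_divide_diff_commute: "(u - v) / (w - z) = (v - u) / (z - w)"
  for u v w z :: "'a::field"
  using minus_divide_divide[of "u - v" "w - z"] by simp

lemma exp_logderiv_commute: "exp_logderiv A B t = exp_logderiv B A t"
  unfolding exp_logderiv_def by (rule diff_divide_diff_commute)

lemma exp_mult_diff: "exp (t * (A - C)) = exp (t * A) / exp (t * C)" for t A C :: real
  unfolding right_diff_distrib by (rule exp_diff)

lemma exp_logderiv_shift:
  assumes "A \<noteq> B" and "t \<noteq> 0"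
  shows "exp_logderiv (A - C) (B - C) t = exp_logderiv A B t - C"
proof -
  have "exp (t * A) \<noteq> exp (t * B)"
    using assms by simp
  then show ?thesis
    unfolding exp_logderiv_def exp_mult_diff by (simp add: field_simps)
qed

lemma exp_moment_0_quotient:
  assumes "B < A" and "D < C"
  shows "exp_moment 0 (B - C) (A - C) t / exp_moment 0 (D - C) 0 t = exp_quotient A B C D t"
proof (cases "t = 0")
  case True
  with assms show ?thesis
    by (simp add: exp_moment_at_0 exp_quotient_def)
next
  case False
  with assms have "exp (t * C) \<noteq> exp (t * D)"
    by simp
  have "exp_moment 0 (B - C) (A - C) t = (exp (t * A) - exp (t * B)) / (exp (t * C) * t)"
    using assms False by (simp add: exp_moment_0_eq exp_mult_diff diff_divide_distrib)
  moreover have "exp_moment 0 (D - C) 0 t = (exp (t * C) - exp (t * D)) / (exp (t * C) * t)"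
    using assms False by (simp add: exp_moment_0_eq exp_mult_diff diff_divide_distrib)
  ultimately show ?thesis
    using False \<open>exp (t * C) \<noteq> exp (t * D)\<close> by (simp add: exp_quotient_def)
qed

lemma exp_quotient_pos:
  assumes "B < A" and "D < C"
  shows "0 < exp_quotient A B C D t"
  using exp_moment_pos[of "B - C" "A - C" 0 t] exp_moment_pos[of "D - C" 0 0 t] assms
  by (simp flip: exp_moment_0_quotient[OF assms])

lemma exp_diff_div_pos:
  fixes A B t :: real
  assumes "B < A" and "t \<noteq> 0"
  shows "0 < (exp (t * A) - exp (t * B)) / t"
  using exp_moment_pos[of B A 0 t] exp_moment_0_eq[of B A t] assms by simp

lemma exp_moment_1_div_0:
  assumes "a < b" and "t \<noteq> 0"
  shows "exp_moment 1 a b t / exp_moment 0 a b t = exp_logderiv b a t - 1 / t"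
proof -
  have "exp (t * b) \<noteq> exp (t * a)"
    using assms by simp
  then show ?thesis
    unfolding exp_moment_0_eq[OF less_imp_le[OF assms(1)] assms(2)]
      exp_moment_1_eq[OF less_imp_le[OF assms(1)] assms(2)]
    using assms by (simp add: exp_logderiv_def field_simps power2_eq_square)
qed

lemma exp_moment_quotient_slope:
  assumes "B < A" and "D < C" and "s \<noteq> 0"
  defines "N k \<equiv> exp_moment k (B - C) (A - C) s" and "M k \<equiv> exp_moment k (D - C) 0 s"
  shows "(N 1 * M 0 - N 0 * M 1) / (M 0)\<^sup>2
    = exp_quotient A B C D s * (exp_logderiv A B s - exp_logderiv C D s)"
proof -
  have "0 < N 0" and "0 < M 0"
    unfolding N_def M_def using assms by (auto intro!: exp_moment_pos)
  then have "(N 1 * M 0 - N 0 * M 1) / (M 0)\<^sup>2 = N 0 / M 0 * (N 1 / N 0 - M 1 / M 0)"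
    by (simp add: field_simps power2_eq_square)
  moreover have "N 0 / M 0 = exp_quotient A B C D s"
    unfolding N_def M_def by (rule exp_moment_0_quotient[OF assms(1,2)])
  moreover have "N 1 / N 0 = exp_logderiv A B s - C - 1 / s"
    unfolding N_def using assms exp_logderiv_shift[of A B s C] exp_moment_1_div_0[of "B - C" "A - C" s]
    by (simp add: exp_logderiv_commute)
  moreover have "M 1 / M 0 = exp_logderiv C D s - C - 1 / s"
    unfolding M_def using assms exp_logderiv_shift[of C D s C] exp_moment_1_div_0[of "D - C" 0 s]
    by (simp add: exp_logderiv_commute)
  ultimately show ?thesis
    by simp
qed

lemma exp_quotient_above_tangent:
  assumes "B < A" and "C \<le> B" and "D < C" and "s \<noteq> 0" and "t \<noteq> s"
  shows "exp_quotient A B C D s * (1 + (t - s) * (exp_logderiv A B s - exp_logderiv C D s))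
    < exp_quotient A B C D t"
proof -
  define N where "N k = exp_moment k (B - C) (A - C)" for k
  define M where "M k = exp_moment k (D - C) 0" for k
  have N_pos: "0 < N k x" if "\<And>u. B - C < u \<Longrightarrow> u < A - C \<Longrightarrow> 0 < u ^ k" for k x
    unfolding N_def using assms that by (intro exp_moment_pos) auto
  have deriv: "(N k has_real_derivative N (Suc k) x) (at x)" "(M k has_real_derivative M (Suc k) x) (at x)"
    for k x
    unfolding N_def M_def by (rule has_real_derivative_exp_moment)+
  have quotient: "N 0 x / M 0 x = exp_quotient A B C D x" for x
    unfolding N_def M_def using assms by (intro exp_moment_0_quotient) auto
  have slope: "(N 1 s * M 0 s - N 0 s * M 1 s) / (M 0 s)\<^sup>2
      = exp_quotient A B C D s * (exp_logderiv A B s - exp_logderiv C D s)"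
    unfolding N_def M_def by (rule exp_moment_quotient_slope[OF assms(1,3,4)])
  have "N 0 s / M 0 s + (N 1 s * M 0 s - N 0 s * M 1 s) / (M 0 s)\<^sup>2 * (t - s) < N 0 t / M 0 t"
  proof (rule quotient_above_tangent[where N'' = "N 2" and M'' = "M 2"])
    show "(N 0 has_real_derivative N 1 x) (at x)" "(M 0 has_real_derivative M 1 x) (at x)"
      "(N 1 has_real_derivative N 2 x) (at x)" "(M 1 has_real_derivative M 2 x) (at x)" for x
      using deriv[of 0 x] deriv[of 1 x] by (simp_all add: numeral_2_eq_2)
    show "0 < N 0 x" "0 \<le> N 1 x" "0 < N 2 x" for x
      using assms by (auto intro!: N_pos less_imp_le[OF N_pos])
    show "0 < M 0 x" "M 1 x \<le> 0" for x
      unfolding M_def using assms by (auto intro!: exp_moment_pos less_imp_le[OF exp_moment_neg])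
    show "M 0 x * M 2 x \<le> 2 * (M 1 x)\<^sup>2" for x
      unfolding M_def using exp_moment_reciprocal_convex[of "C - D" x] assms by simp
  qed (rule \<open>t \<noteq> s\<close>)
  then show ?thesis
    unfolding quotient slope by (simp add: algebra_simps)
qed

lemma exp_quotient_reflect:
  "exp_quotient (- D) (- C) (- B) (- A) (- t) = inverse (exp_quotient A B C D t)"
  unfolding exp_quotient_def by (simp add: diff_divide_diff_commute)

lemma exp_logderiv_reflect: "exp_logderiv (- A) (- B) (- t) = - exp_logderiv A B t"
  unfolding exp_logderiv_def by (simp add: minus_divide_left algebra_simps)

lemma exp_logderiv_diff_bounds:
  assumes "B < A" and "C \<le> B" and "D < C"
  defines "Q \<equiv> exp_quotient A B C D" and "R \<equiv> exp_logderiv A B 1 - exp_logderiv C D 1"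
  shows "1 - Q 0 / Q 1 < R" and "R < Q 1 / Q 0 - 1"
proof -
  have Q_pos: "0 < Q t" for t
    unfolding Q_def using assms by (intro exp_quotient_pos) auto
  have "Q 1 * (1 - R) < Q 0"
    using exp_quotient_above_tangent[OF assms(1-3), of 1 0] by (simp add: Q_def R_def algebra_simps)
  with Q_pos[of 1] have "1 - R < Q 0 / Q 1"
    by (simp add: pos_less_divide_eq mult.commute)
  then show "1 - Q 0 / Q 1 < R"
    by linarith
  txt \<open>The reflected quotient is \<open>t \<mapsto> 1 / Q (- t)\<close>.\<close>
  have "exp_quotient (- D) (- C) (- B) (- A) (- 1)
      * (1 + (0 - - 1) * (exp_logderiv (- D) (- C) (- 1) - exp_logderiv (- B) (- A) (- 1)))
      < exp_quotient (- D) (- C) (- B) (- A) (- 0)"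
    using exp_quotient_above_tangent[where s = "- 1" and t = 0] assms by simp
  then have "(1 + R) / Q 1 < 1 / Q 0"
    unfolding exp_quotient_reflect exp_logderiv_reflect
    by (simp add: Q_def R_def exp_logderiv_commute[of D] exp_logderiv_commute[of B]
        divide_inverse algebra_simps)
  with Q_pos show "R < Q 1 / Q 0 - 1"
    by (simp add: divide_less_eq pos_less_divide_eq field_simps)
qed

section \<open>Means\<close>

lemma identric_pos: "0 < u \<Longrightarrow> 0 < v \<Longrightarrow> 0 < identric u v"
  by (simp add: identric_def)

lemma ln_identric:
  assumes "0 < u" and "0 < v" and "u \<noteq> v"
  shows "ln (identric u v) = (u * ln u - v * ln v) / (u - v) - 1"
  using assms by (simp add: identric_def powr_def ln_div field_simps)

lemma ln_identric_exp:
  assumes "A \<noteq> B" and "s \<noteq> 0"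
  shows "ln (identric (exp (s * A)) (exp (s * B))) = s * exp_logderiv A B s - 1"
proof -
  have "exp (s * A) \<noteq> exp (s * B)"
    using assms by simp
  then show ?thesis
    by (simp add: ln_identric exp_logderiv_def field_simps)
qed

lemma ln_identric_minus_ln:
  assumes "0 < b" and "b < a"
  shows "ln (identric a b) - ln b = a / logmean a b - 1"
  using assms by (simp add: ln_identric logmean_def field_simps)

lemma logmean_less_arith_mean:
  assumes "0 < b" and "b < a"
  shows "logmean a b < (a + b) / 2"
proof -
  define x where "x = ln a - ln b"
  have "0 < x" and a: "a = b * exp x"
    using assms by (simp_all add: x_def exp_diff)
  have "0 < (x - 2) * exp x + x + 2"
    using exp_poly_mult_pos[of x] \<open>0 < x\<close> by (simp add: zero_less_mult_iff)
  then have "2 * (exp x - 1) < x * (exp x + 1)"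
    by (simp add: algebra_simps)
  then have "b * (2 * (exp x - 1)) < b * (x * (exp x + 1))"
    using assms by simp
  then have "2 * (a - b) < (a + b) * x"
    by (simp add: a algebra_simps)
  then show ?thesis
    using assms \<open>0 < x\<close> by (simp add: logmean_def x_def divide_less_eq mult.commute)
qed

lemma mult_less_logmean_sq:
  assumes "0 < b" and "b < a"
  shows "a * b < (logmean a b)\<^sup>2"
proof -
  define x where "x = ln a - ln b"
  have "0 < x" and a: "a = b * exp x"
    using assms by (simp_all add: x_def exp_diff)
  have "a * b * x\<^sup>2 < (a - b)\<^sup>2"
    using mult_strict_left_mono[OF sq_mult_exp_less_sq_exp_minus_one[OF \<open>0 < x\<close>], of "b\<^sup>2"] assms
    by (simp add: a power2_eq_square algebra_simps)
  then show ?thesis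
    using assms \<open>0 < x\<close> by (simp add: logmean_def x_def power_divide pos_less_divide_eq)
qed

lemma plogmean_powr_self:
  assumes "0 < b" and "b < a" and "p \<noteq> 0" and "p \<noteq> -1"
  shows "plogmean p a b powr p = (exp ((p + 1) * ln a) - exp ((p + 1) * ln b)) / ((p + 1) * (a - b))"
proof -
  define X where "X = (exp ((p + 1) * ln a) - exp ((p + 1) * ln b)) / ((p + 1) * (a - b))"
  have "0 < (exp ((p + 1) * ln a) - exp ((p + 1) * ln b)) / (p + 1)"
    using assms by (intro exp_diff_div_pos) auto
  with assms have "0 < X"
    unfolding X_def by (simp add: divide_pos_pos flip: divide_divide_eq_left)
  moreover have "plogmean p a b = X powr (1 / p)"
    using assms by (simp add: plogmean_def powr_def X_def)
  ultimately show ?thesis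
    using assms by (simp add: powr_powr flip: X_def)
qed

lemma plogmean_powr_ratio:
  assumes "0 < d" and "d < c" and "0 < b" and "b < a" and "p \<noteq> 0" and "p \<noteq> -1"
  shows "plogmean p a b powr p / plogmean p c d powr p
    = (c - d) / (a - b) * exp_quotient (ln a) (ln b) (ln c) (ln d) (p + 1)"
proof -
  have rescale: "X / (t * u) / (Y / (t * v)) = v / u * (X / Y)"
    if "t \<noteq> 0" "u \<noteq> 0" "v \<noteq> 0" "Y \<noteq> 0" for X Y t u v :: real
    using that by (simp add: field_simps)
  have "p + 1 \<noteq> 0" and "exp ((p + 1) * ln c) \<noteq> exp ((p + 1) * ln d)"
    using assms by simp_all
  with assms show ?thesis
    by (simp add: plogmean_powr_self exp_quotient_def rescale)
qed

lemma ln_identric_powr_ratio: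
  assumes "0 < d" and "d < c" and "0 < b" and "b < a" and "s \<noteq> 0"
  shows "ln (identric (a powr s) (b powr s) / identric (c powr s) (d powr s))
    = s * (exp_logderiv (ln a) (ln b) s - exp_logderiv (ln c) (ln d) s)"
proof -
  have "identric (exp x) (exp y) \<noteq> 0" for x y
    using identric_pos[of "exp x" "exp y"] by simp
  with assms show ?thesis
    by (simp add: powr_def ln_div ln_identric_exp right_diff_distrib)
qed

lemma plogmean_ratio_above_tangent:
  assumes "0 < d" and "d < c" and "c \<le> b" and "b < a"
    and "p \<notin> {0, -1}" and "q \<notin> {0, -1}" and "p \<noteq> q"
  shows "plogmean q a b powr q / plogmean q c d powr q *
      (1 + (p - q) / (q + 1) *
        ln (identric (a powr (q + 1)) (b powr (q + 1)) / identric (c powr (q + 1)) (d powr (q + 1))))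
    < plogmean p a b powr p / plogmean p c d powr p"
proof -
  define Q where "Q = exp_quotient (ln a) (ln b) (ln c) (ln d)"
  define R where "R = exp_logderiv (ln a) (ln b) (q + 1) - exp_logderiv (ln c) (ln d) (q + 1)"
  have "Q (q + 1) * (1 + ((p + 1) - (q + 1)) * R) < Q (p + 1)"
    unfolding Q_def R_def using assms
    by (intro exp_quotient_above_tangent) auto
  then have "(c - d) / (a - b) * (Q (q + 1) * (1 + (p - q) * R)) < (c - d) / (a - b) * Q (p + 1)"
    using assms by (intro mult_strict_left_mono) auto
  with assms show ?thesis
    by (simp add: plogmean_powr_ratio ln_identric_powr_ratio Q_def R_def)
qed

lemma identric_ratio_bounds:
  assumes "0 < d" and "d < c" and "c \<le> b" and "b < a"
  shows "exp (1 - logmean c d / logmean a b) < identric a b / identric c d"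
    and "identric a b / identric c d < exp (logmean a b / logmean c d - 1)"
proof -
  define Q where "Q = exp_quotient (ln a) (ln b) (ln c) (ln d)"
  define R where "R = exp_logderiv (ln a) (ln b) 1 - exp_logderiv (ln c) (ln d) 1"
  have "0 < identric a b / identric c d"
    using assms by (simp add: identric_pos)
  moreover have "ln (identric a b / identric c d) = R"
    using ln_identric_powr_ratio[of d c b a 1] assms by (simp add: R_def)
  ultimately have "identric a b / identric c d = exp R"
    by (metis exp_ln)
  moreover have "logmean c d / logmean a b = Q 0 / Q 1" "logmean a b / logmean c d = Q 1 / Q 0"
    using assms by (simp_all add: Q_def exp_quotient_def logmean_def)
  moreover have "1 - Q 0 / Q 1 < R" "R < Q 1 / Q 0 - 1"
    unfolding Q_def R_def using assms by (intro exp_logderiv_diff_bounds; simp)+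
  ultimately show "exp (1 - logmean c d / logmean a b) < identric a b / identric c d"
    and "identric a b / identric c d < exp (logmean a b / logmean c d - 1)"
    by simp_all
qed

lemma identric_div_bounds:
  assumes "0 < b" and "b < a"
  shows "exp (1 - b / logmean a b) < identric a b / b"
    and "identric a b / b < exp (logmean a b / b - 1)"
proof -
  have L_pos: "0 < logmean a b"
    using assms by (simp add: logmean_def)
  have "0 < identric a b"
    using assms by (simp add: identric_pos)
  then have "0 < identric a b / b" and "ln (identric a b / b) = a / logmean a b - 1"
    using ln_identric_minus_ln[OF assms] assms by (simp_all add: ln_div)
  then have ratio: "identric a b / b = exp (a / logmean a b - 1)"
    by (metis exp_ln)
  have "2 < (a + b) / logmean a b"
    using logmean_less_arith_mean[OF assms] L_pos by (simp add: pos_less_divide_eq)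
  then have "1 - b / logmean a b < a / logmean a b - 1"
    unfolding add_divide_distrib by linarith
  then show "exp (1 - b / logmean a b) < identric a b / b"
    by (simp add: ratio)
  have "a / logmean a b < logmean a b / b"
    using mult_less_logmean_sq[OF assms] L_pos assms by (simp add: field_simps power2_eq_square)
  then show "identric a b / b < exp (logmean a b / b - 1)"
    by (simp add: ratio)
qed

theorem theorem3p1:
  shows "(\<forall>a b c d p q :: real. a > b \<and> b \<ge> c \<and> c > d \<and> d > 0 \<and>
            p \<notin> {0, -1} \<and> q \<notin> {0, -1} \<longrightarrow>
            (let lhs = plogmean p a b powr p / plogmean p c d powr p;
                 rhs = plogmean q a b powr q / plogmean q c d powr q *
                   (1 + (p - q) / (q + 1) *
                     ln (identric (a powr (q + 1)) (b powr (q + 1)) /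
                         identric (c powr (q + 1)) (d powr (q + 1))))
             in lhs \<ge> rhs \<and> (lhs = rhs \<longleftrightarrow> p = q)))
       \<and> (\<forall>a b c d :: real. a > b \<and> b \<ge> c \<and> c > d \<and> d > 0 \<longrightarrow>
            exp (1 - logmean c d / logmean a b) < identric a b / identric c d \<and>
            identric a b / identric c d < exp (logmean a b / logmean c d - 1))
       \<and> (\<forall>a b :: real. a > b \<and> b > 0 \<longrightarrow>
            exp (1 - b / logmean a b) < identric a b / b \<and>
            identric a b / b < exp (logmean a b / b - 1))"
proof (intro conjI allI impI)
  fix a b c d p q :: real
  assume "a > b \<and> b \<ge> c \<and> c > d \<and> d > 0 \<and> p \<notin> {0, -1} \<and> q \<notin> {0, -1}"
  then show "let lhs = plogmean p a b powr p / plogmean p c d powr p;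
                 rhs = plogmean q a b powr q / plogmean q c d powr q *
                   (1 + (p - q) / (q + 1) *
                     ln (identric (a powr (q + 1)) (b powr (q + 1)) /
                         identric (c powr (q + 1)) (d powr (q + 1))))
             in lhs \<ge> rhs \<and> (lhs = rhs \<longleftrightarrow> p = q)"
    using plogmean_ratio_above_tangent[of d c b a p q] by (cases "p = q") (auto simp: Let_def)
next
  fix a b c d :: real
  assume "a > b \<and> b \<ge> c \<and> c > d \<and> d > 0"
  then show "exp (1 - logmean c d / logmean a b) < identric a b / identric c d"
    and "identric a b / identric c d < exp (logmean a b / logmean c d - 1)"
    using identric_ratio_bounds[of d c b a] by blast+
next
  fix a b :: real
  assume "a > b \<and> b > 0"
  then show "exp (1 - b / logmean a b) < identric a b / b"
    and "identric a b / b < exp (logmean a b / b - 1)"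
    using identric_div_bounds[of b a] by blast+
qed

end
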